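(* Let $h\in\mathbb N$ and let $W:\mathbb Z\to\mathbb R$ be the even function given for $a\ge0$ by $W(a)=2h-3a$ if $0\le a\le h$, $W(a)=a-2h$ if $h\le a\le 2h$, and $W(a)=0$ if $a>2h$. Then for all $q\in\mathbb N$, $\beta\in\mathbb R\setminus\mathbb Z$, $\ell\in\mathbb N$, $\alpha\in\mathbb R$: $$\sum_{\substack{a\in\mathbb Z\\ a\equiv0\ (\mathrm{mod}\ q)}}W(a)=2q\left\|\frac hq\right\|,\qquad \sum_{|a|\le 2h}W(a)e(a\beta)=\frac{4\sin^4(\pi h\beta)}{\sin^2(\pi\beta)},\qquad \sum_{b\in\mathbb Z}W(\ell b)e(b\alpha)\ge0.$$ Moreover, writing $E_X(\beta)=\sum_{a\in\mathbb Z,\,|a|\le X}e(a\beta)$, $$\frac1\ell\sum_{a\in\mathbb Z}W(a\ell)e(a\beta)=\frac{4\sin^2\bigl(\pi\beta\lfloor h/\ell\rfloor\bigr)-\sin^2\bigl(\pi\beta\lfloor 2h/\ell\rfloor\bigr)}{\sin^2(\pi\beta)}+4\left\{\frac h\ell\right\}E_{h/\ell}(\beta)-\left\{\frac{2h}\ell\right\}E_{2h/\ell}(\beta)$$ $$=2\Bigl(1-\cos\bigl(2\pi\beta\lfloor h/\ell\rfloor\bigr)\Bigr)\sum_{|a|\le h/\ell}\Bigl(\lfloor h/\ell\rfloor-|a|\Bigr)e(a\beta)-\left(2\left\{\frac h\ell\right\}-\left\{\frac{2h}\ell\right\}\right)E_{2\lfloor h/\ell\rfloor}(\beta)+4\left\{\frac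 h\ell\right\}E_{h/\ell}(\beta)-\left\{\frac{2h}\ell\right\}E_{2h/\ell}(\beta).$$
   Context: $e(\theta)=e^{2\pi i\theta}$; $\|r\|=\min_{n\in\mathbb Z}|r-n|$ is the distance to the nearest integer; $\lfloor\cdot\rfloor$ and $\{\cdot\}$ denote integer and fractional parts. *)

theory Defs
  imports "HOL-Analysis.Analysis" "HOL-Library.Complex_Order"
begin

definition e :: "real \<Rightarrow> complex" where
  "e \<theta> = exp (2 * of_real pi * \<i> * of_real \<theta>)"

definition nint_dist :: "real \<Rightarrow> real" where
  "nint_dist r = (INF n::int. \<bar>r - of_int n\<bar>)"

definition W :: "nat \<Rightarrow> int \<Rightarrow> real" where
  "W h a = (let b = \<bar>a\<bar> in
     if b \<le> int h then 2 * real h - 3 * of_int b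
     else if b \<le> 2 * int h then of_int b - 2 * real h
     else 0)"

definition E :: "real \<Rightarrow> real \<Rightarrow> complex" where
  "E X \<beta> = (\<Sum>a\<in>{a::int. \<bar>of_int a\<bar> \<le> X}. e (of_int a * \<beta>))"

end

(*
  W = 4 T_h - T_2h, where T_X(a) = max(0, X - |a|) is the tent of half-width X, and
  W(l a) = l (4 T_(h/l)(a) - T_(2h/l)(a)). The transform of T_X is K_N + {X} D_N with N = floor X,
  where D_N is the Dirichlet kernel and K_N = D_0 + ... + D_(N-1). The identities
  K_N(b) sin^2(pi b) = sin^2(pi N b) and K_2N = 2 (1 + cos(2 pi N b)) K_N turn the second and
  the fourth claim into trigonometry. At b = 0 the tent sums to X^2 + {X} (1 - {X}), and
  4 {X} (1 - {X}) - {2X} (1 - {2X}) = 2 ||X|| gives the first claim. The transform of W is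
  2 (1 - cos(2 pi h b)) K_h >= 0; averaging it over the l points (a + j)/l keeps exactly the
  frequencies divisible by l and yields l times the dilated transform, whence the third claim.
*)
theory Submission
  imports Defs
begin

lemma e_eq_cis: "e t = cis (2 * pi * t)"
  unfolding e_def cis_conv_exp by (simp add: mult_ac)

lemma e_0 [simp]: "e 0 = 1"
  by (simp add: e_def)

lemma e_add: "e (x + y) = e x * e y"
  by (simp add: e_eq_cis cis_mult distrib_left)

lemma e_of_nat_mult: "e (real n * x) = e x ^ n"
  unfolding e_eq_cis Complex.DeMoivre by (simp add: mult_ac)

lemma e_plus_e_uminus: "e x + e (- x) = of_real (2 * cos (2 * pi * x))"
  by (simp add: e_eq_cis cis.ctr complex_eq_iff)

lemma e_eq_1_iff: "e t = 1 \<longleftrightarrow> t \<in> \<int>"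
proof
  assume "e t = 1"
  then have "cos (2 * pi * t) = 1"
    by (simp add: e_eq_cis complex_eq_iff)
  then obtain n :: int where "2 * pi * t = of_int n * 2 * pi"
    by (auto simp: cos_one_2pi_int)
  then have "t = of_int n"
    by simp
  then show "t \<in> \<int>"
    by simp
qed (simp add: e_eq_cis)

lemma sum_e_div_eq:
  assumes "l > 0"
  shows "(\<Sum>j<l. e (of_int a * real j / real l)) = (if int l dvd a then of_nat l else 0)"
proof -
  define z where "z = e (of_int a / real l)"
  have powers: "e (of_int a * real j / real l) = z ^ j" for j
    unfolding z_def e_of_nat_mult[symmetric] by (simp add: mult_ac)
  have "z ^ l = 1"
    using assms unfolding z_def e_of_nat_mult[symmetric] by (simp add: e_eq_1_iff)
  moreover have "z = 1 \<longleftrightarrow> int l dvd a"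
    using assms of_int_div_of_int_in_Ints_iff[of a "int l", where 'a = real]
    unfolding z_def e_eq_1_iff by simp
  ultimately show ?thesis
    by (cases "z = 1") (simp_all add: powers geometric_sum)
qed

lemma infsum_eq_sum_support:
  assumes "finite S" "\<And>a. a \<notin> S \<Longrightarrow> f a = 0"
  shows "infsum f UNIV = sum f S"
proof -
  have "infsum f UNIV = infsum f S"
    by (rule infsum_cong_neutral) (use assms in auto)
  then show ?thesis
    using assms(1) by simp
qed

lemma sum_translates_infsum_e:
  fixes f :: "int \<Rightarrow> complex"
  assumes "l > 0" "finite S" "\<And>a. a \<notin> S \<Longrightarrow> f a = 0"
  shows "(\<Sum>j<l. \<Sum>\<^sub>\<infinity>a. f a * e (of_int a * ((\<alpha> + real j) / real l)))
    = of_nat l * (\<Sum>\<^sub>\<infinity>b. f (b * int l) * e (of_int b * \<alpha>))"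
proof -
  have finite_sum: "(\<Sum>\<^sub>\<infinity>a. f a * e (of_int a * \<gamma>)) = (\<Sum>a\<in>S. f a * e (of_int a * \<gamma>))" for \<gamma>
    using assms(2,3) by (intro infsum_eq_sum_support) auto
  have "(\<Sum>j<l. \<Sum>\<^sub>\<infinity>a. f a * e (of_int a * ((\<alpha> + real j) / real l)))
      = (\<Sum>a\<in>S. \<Sum>j<l. f a * e (of_int a * ((\<alpha> + real j) / real l)))"
    unfolding finite_sum by (rule sum.swap)
  also have "\<dots> = (\<Sum>a\<in>S. f a * e (of_int a * \<alpha> / real l) * (\<Sum>j<l. e (of_int a * real j / real l)))"
    by (simp add: sum_distrib_left e_add[symmetric] add_divide_distrib algebra_simps)
  also have "\<dots> = of_nat l * (\<Sum>a\<in>{a\<in>S. int l dvd a}. f a * e (of_int a * \<alpha> / real l))"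
    using assms(1,2) by (simp add: sum_e_div_eq sum.inter_filter sum_distrib_left if_distrib mult_ac cong: if_cong)
  also have "{a\<in>S. int l dvd a} = (\<lambda>b. b * int l) ` {b. b * int l \<in> S}"
    by (auto elim!: dvdE simp: mult.commute)
  also have "(\<Sum>a\<in>(\<lambda>b. b * int l) ` {b. b * int l \<in> S}. f a * e (of_int a * \<alpha> / real l))
      = (\<Sum>b\<in>{b. b * int l \<in> S}. f (b * int l) * e (of_int b * \<alpha>))"
    using assms(1) by (subst sum.reindex) (auto simp: inj_on_def)
  also have "\<dots> = (\<Sum>\<^sub>\<infinity>b. f (b * int l) * e (of_int b * \<alpha>))"
  proof (rule infsum_eq_sum_support[symmetric])
    show "finite {b. b * int l \<in> S}"
      using finite_vimageI[OF assms(2), of "\<lambda>b. b * int l"] assms(1) by (simp add: vimage_def inj_on_def)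
  qed (use assms(3) in auto)
  finally show ?thesis .
qed

definition dirichlet_kernel :: "int \<Rightarrow> real \<Rightarrow> complex" where
  "dirichlet_kernel N \<beta> = (\<Sum>a=-N..N. e (of_int a * \<beta>))"

(* N times the normalised Fejer kernel *)
definition fejer_kernel :: "int \<Rightarrow> real \<Rightarrow> complex" where
  "fejer_kernel N \<beta> = (\<Sum>a=-N..N. of_int (N - \<bar>a\<bar>) * e (of_int a * \<beta>))"

lemma symmetric_interval_succ:
  "N \<ge> 0 \<Longrightarrow> {-(N + 1)..N + 1} = insert (-(N + 1)) (insert (N + 1) {-N..N::int})"
  by auto

lemma dirichlet_kernel_succ:
  assumes "N \<ge> 0"
  shows "dirichlet_kernel (N + 1) \<beta> = dirichlet_kernel N \<beta> + of_real (2 * cos (2 * pi * (of_int (N + 1) * \<beta>)))"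
proof -
  have "dirichlet_kernel (N + 1) \<beta>
      = dirichlet_kernel N \<beta> + (e (of_int (N + 1) * \<beta>) + e (- (of_int (N + 1) * \<beta>)))"
    unfolding dirichlet_kernel_def symmetric_interval_succ[OF assms] using assms by (simp add: algebra_simps)
  then show ?thesis
    by (simp only: e_plus_e_uminus)
qed

lemma fejer_kernel_succ:
  assumes "N \<ge> 0"
  shows "fejer_kernel (N + 1) \<beta> = fejer_kernel N \<beta> + dirichlet_kernel N \<beta>"
proof -
  have "fejer_kernel (N + 1) \<beta> = (\<Sum>a=-N..N. of_int (N + 1 - \<bar>a\<bar>) * e (of_int a * \<beta>))"
    unfolding fejer_kernel_def symmetric_interval_succ[OF assms] using assms by simp
  also have "\<dots> = (\<Sum>a=-N..N. of_int (N - \<bar>a\<bar>) * e (of_int a * \<beta>) + e (of_int a * \<beta>))"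
    by (simp add: algebra_simps)
  finally show ?thesis
    by (simp add: fejer_kernel_def dirichlet_kernel_def sum.distrib)
qed

lemma dirichlet_kernel_mult_sin:
  assumes "N \<ge> 0"
  shows "dirichlet_kernel N \<beta> * of_real (sin (pi * \<beta>)) = of_real (sin ((2 * of_int N + 1) * pi * \<beta>))"
  using assms
proof (induction N rule: int_ge_induct)
  case base
  then show ?case
    by (simp add: dirichlet_kernel_def)
next
  case (step N)
  define u where "u = 2 * pi * (of_int (N + 1) * \<beta>)"
  have "(2 * of_int N + 1) * pi * \<beta> = u - pi * \<beta>" "(2 * of_int (N + 1) + 1) * pi * \<beta> = u + pi * \<beta>"
    unfolding u_def by (simp_all add: algebra_simps)
  then have "sin ((2 * of_int N + 1) * pi * \<beta>) + 2 * cos u * sin (pi * \<beta>)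
      = sin ((2 * of_int (N + 1) + 1) * pi * \<beta>)"
    by (simp add: sin_add sin_diff)
  with step show ?case
    unfolding dirichlet_kernel_succ[OF step(1)] u_def by (simp add: distrib_right flip: of_real_mult of_real_add)
qed

lemma sin_add_squared: "sin ((A::real) + x) ^ 2 = sin A ^ 2 + sin (2 * A + x) * sin x"
proof -
  have "sin (2 * A + x) = 2 * sin A * cos A * cos x + (cos A ^ 2 - sin A ^ 2) * sin x"
    by (simp add: sin_add sin_double cos_double)
  moreover have "sin (A + x) = sin A * cos x + cos A * sin x"
    by (simp add: sin_add)
  moreover have "cos A ^ 2 = 1 - sin A ^ 2" "cos x ^ 2 = 1 - sin x ^ 2"
    by (simp_all add: cos_squared_eq)
  ultimately show ?thesis
    by algebra
qed

lemma fejer_kernel_mult_sin: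
  assumes "N \<ge> 0"
  shows "fejer_kernel N \<beta> * of_real (sin (pi * \<beta>) ^ 2) = of_real (sin (pi * \<beta> * of_int N) ^ 2)"
  using assms
proof (induction N rule: int_ge_induct)
  case base
  then show ?case
    by (simp add: fejer_kernel_def)
next
  case (step N)
  have "fejer_kernel (N + 1) \<beta> * of_real (sin (pi * \<beta>) ^ 2)
      = fejer_kernel N \<beta> * of_real (sin (pi * \<beta>) ^ 2)
        + dirichlet_kernel N \<beta> * of_real (sin (pi * \<beta>)) * of_real (sin (pi * \<beta>))"
    unfolding fejer_kernel_succ[OF step(1)] by (simp add: power2_eq_square algebra_simps)
  also have "\<dots> = of_real (sin (pi * \<beta> * of_int N) ^ 2 + sin ((2 * of_int N + 1) * pi * \<beta>) * sin (pi * \<beta>))"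
    using step by (simp add: dirichlet_kernel_mult_sin)
  also have "\<dots> = of_real (sin (pi * \<beta> * of_int (N + 1)) ^ 2)"
    using sin_add_squared[of "pi * \<beta> * of_int N" "pi * \<beta>"] by (simp add: algebra_simps)
  finally show ?case .
qed

lemma dirichlet_kernel_int:
  assumes "\<beta> \<in> \<int>" "N \<ge> 0"
  shows "dirichlet_kernel N \<beta> = of_int (2 * N + 1)"
proof -
  have "e (of_int a * \<beta>) = 1" for a
    using assms(1) by (simp add: e_eq_1_iff)
  then show ?thesis
    using assms(2) by (simp add: dirichlet_kernel_def)
qed

lemma fejer_kernel_int:
  assumes "\<beta> \<in> \<int>" "N \<ge> 0"
  shows "fejer_kernel N \<beta> = of_int (N ^ 2)"
  using assms(2)
proof (induction N rule: int_ge_induct)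
  case base
  then show ?case
    by (simp add: fejer_kernel_def)
next
  case (step N)
  then show ?case
    unfolding fejer_kernel_succ[OF step(1)] dirichlet_kernel_int[OF assms(1) step(1)]
    by (simp add: power2_eq_square algebra_simps)
qed

lemma sin_pi_mult_nonzero: "\<beta> \<notin> \<int> \<Longrightarrow> sin (pi * \<beta>) \<noteq> 0"
  by (simp add: mult.commute[of pi] sin_times_pi_eq_0)

lemma fejer_kernel_eq:
  assumes "\<beta> \<notin> \<int>" "N \<ge> 0"
  shows "fejer_kernel N \<beta> = of_real (sin (pi * \<beta> * of_int N) ^ 2 / sin (pi * \<beta>) ^ 2)"
  using fejer_kernel_mult_sin[OF assms(2), of \<beta>] sin_pi_mult_nonzero[OF assms(1)]
  by (simp add: field_simps)

lemma fejer_kernel_nonneg: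
  assumes "N \<ge> 0"
  shows "fejer_kernel N \<beta> \<ge> 0"
  by (cases "\<beta> \<in> \<int>") (simp_all add: assms fejer_kernel_int fejer_kernel_eq less_eq_complex_def)

lemma fejer_kernel_double:
  assumes "N \<ge> 0"
  shows "fejer_kernel (2 * N) \<beta> = of_real (2 * (1 + cos (2 * pi * \<beta> * of_int N))) * fejer_kernel N \<beta>"
proof (cases "\<beta> \<in> \<int>")
  case True
  then obtain m where "\<beta> = of_int m"
    by (auto elim: Ints_cases)
  then have "cos (2 * pi * \<beta> * of_int N) = 1"
    by (metis cos_int_2pin mult.assoc of_int_mult)
  then show ?thesis
    using True assms by (simp add: fejer_kernel_int power2_eq_square)
next
  case False
  define A where "A = pi * \<beta> * of_int N"
  have "sin (2 * A) ^ 2 = 2 * (1 + cos (2 * A)) * sin A ^ 2"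
    by (simp add: sin_double cos_double_cos power_mult_distrib)
  have "fejer_kernel (2 * N) \<beta> = of_real (sin (2 * A) ^ 2 / sin (pi * \<beta>) ^ 2)"
    using fejer_kernel_eq[OF False, of "2 * N"] assms by (simp add: A_def mult_ac)
  also have "\<dots> = of_real (2 * (1 + cos (2 * A))) * of_real (sin A ^ 2 / sin (pi * \<beta>) ^ 2)"
    unfolding \<open>sin (2 * A) ^ 2 = _\<close> by simp
  also have "\<dots> = of_real (2 * (1 + cos (2 * pi * \<beta> * of_int N))) * fejer_kernel N \<beta>"
    unfolding fejer_kernel_eq[OF False assms] by (simp add: A_def mult_ac)
  finally show ?thesis .
qed

lemma abs_le_set_eq_interval: "{a::int. \<bar>of_int a\<bar> \<le> X} = {-\<lfloor>X\<rfloor>..\<lfloor>X\<rfloor>}"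
proof (rule set_eqI)
  fix a :: int
  have "\<bar>of_int a\<bar> \<le> X \<longleftrightarrow> \<bar>a\<bar> \<le> \<lfloor>X\<rfloor>"
    by (metis le_floor_iff of_int_abs)
  then show "a \<in> {a. \<bar>of_int a\<bar> \<le> X} \<longleftrightarrow> a \<in> {-\<lfloor>X\<rfloor>..\<lfloor>X\<rfloor>}"
    by auto
qed

lemma E_eq_dirichlet_kernel: "E X \<beta> = dirichlet_kernel \<lfloor>X\<rfloor> \<beta>"
  unfolding E_def dirichlet_kernel_def abs_le_set_eq_interval ..

lemma floor_double: "\<lfloor>2 * (x::real)\<rfloor> = 2 * \<lfloor>x\<rfloor> + (if frac x < 1/2 then 0 else 1)"
proof -
  have "0 \<le> frac x" "frac x < 1"
    by (simp_all add: frac_lt_1)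
  then show ?thesis
    by (intro floor_unique) (auto simp: frac_def)
qed

lemma frac_double: "frac (2 * (x::real)) = 2 * frac x - (if frac x < 1/2 then 0 else 1)"
  unfolding frac_def[of "2 * x"] floor_double by (simp add: frac_def)

lemma nint_dist_eq_min_frac: "nint_dist x = min (frac x) (1 - frac x)"
  unfolding nint_dist_def
proof (rule cInf_eq_minimum)
  show "min (frac x) (1 - frac x) \<in> range (\<lambda>n::int. \<bar>x - of_int n\<bar>)"
  proof (cases "frac x \<le> 1 - frac x")
    case True
    then have "min (frac x) (1 - frac x) = \<bar>x - of_int \<lfloor>x\<rfloor>\<bar>"
      by (simp add: frac_def)
    then show ?thesis
      by blast
  next
    case False
    then have "min (frac x) (1 - frac x) = \<bar>x - of_int (\<lfloor>x\<rfloor> + 1)\<bar>"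
      by (simp add: frac_def)
    then show ?thesis
      by blast
  qed
  fix y assume "y \<in> range (\<lambda>n::int. \<bar>x - of_int n\<bar>)"
  then obtain n :: int where y: "y = \<bar>x - of_int n\<bar>"
    by blast
  show "min (frac x) (1 - frac x) \<le> y"
  proof (cases "n \<le> \<lfloor>x\<rfloor>")
    case True
    then have "of_int n \<le> x - frac x"
      by (simp add: frac_def)
    then show ?thesis
      unfolding y by simp
  next
    case False
    then have "of_int n \<ge> x - frac x + 1"
      by (simp add: frac_def)
    then show ?thesis
      unfolding y using frac_lt_1[of x] by simp
  qed
qed

lemma nint_dist_eq_frac_double:
  "2 * nint_dist x = 4 * frac x * (1 - frac x) - frac (2 * x) * (1 - frac (2 * x))"
  unfolding nint_dist_eq_min_frac frac_double by (auto simp: min_def algebra_simps)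

definition tent :: "real \<Rightarrow> int \<Rightarrow> real" where
  "tent X a = max 0 (X - of_int \<bar>a\<bar>)"

definition tent_transform :: "real \<Rightarrow> real \<Rightarrow> complex" where
  "tent_transform X \<beta> = fejer_kernel \<lfloor>X\<rfloor> \<beta> + of_real (frac X) * dirichlet_kernel \<lfloor>X\<rfloor> \<beta>"

lemma tent_eq:
  "\<bar>a\<bar> \<le> \<lfloor>X\<rfloor> \<Longrightarrow> tent X a = of_int (\<lfloor>X\<rfloor> - \<bar>a\<bar>) + frac X"
  "\<bar>a\<bar> > \<lfloor>X\<rfloor> \<Longrightarrow> tent X a = 0"
  unfolding tent_def frac_def by linarith+

lemma has_sum_tent:
  "((\<lambda>a. of_real (tent X a) * e (of_int a * \<beta>)) has_sum tent_transform X \<beta>) UNIV"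
proof (rule has_sum_finite_neutralI)
  show "of_real (tent X a) * e (of_int a * \<beta>) = 0" if "a \<in> UNIV - {-\<lfloor>X\<rfloor>..\<lfloor>X\<rfloor>}" for a
    using that by (subst tent_eq(2)) auto
  have "of_real (tent X a) * e (of_int a * \<beta>)
      = of_int (\<lfloor>X\<rfloor> - \<bar>a\<bar>) * e (of_int a * \<beta>) + of_real (frac X) * e (of_int a * \<beta>)"
    if "a \<in> {-\<lfloor>X\<rfloor>..\<lfloor>X\<rfloor>}" for a
    using that by (simp add: tent_eq(1) abs_le_iff distrib_right del: of_int_abs)
  then show "tent_transform X \<beta> = (\<Sum>a=-\<lfloor>X\<rfloor>..\<lfloor>X\<rfloor>. of_real (tent X a) * e (of_int a * \<beta>))"
    by (simp add: tent_transform_def fejer_kernel_def dirichlet_kernel_def sum.distrib sum_distrib_left)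
qed auto

lemma tent_transform_0:
  assumes "X \<ge> 0"
  shows "tent_transform X 0 = of_real (X ^ 2 + frac X * (1 - frac X))"
proof -
  have "of_int (\<lfloor>X\<rfloor> ^ 2) + frac X * of_int (2 * \<lfloor>X\<rfloor> + 1) = X ^ 2 + frac X * (1 - frac X)"
    by (simp add: frac_def power2_eq_square algebra_simps)
  moreover have "tent_transform X 0 = of_real (of_int (\<lfloor>X\<rfloor> ^ 2) + frac X * of_int (2 * \<lfloor>X\<rfloor> + 1))"
    using assms by (simp add: tent_transform_def fejer_kernel_int dirichlet_kernel_int)
  ultimately show ?thesis
    by simp
qed

lemma tent_transform_eq_sin:
  assumes "X \<ge> 0" "\<beta> \<notin> \<int>"
  shows "tent_transform X \<beta>
    = of_real (sin (pi * \<beta> * of_int \<lfloor>X\<rfloor>) ^ 2 / sin (pi * \<beta>) ^ 2) + of_real (frac X) * E X \<beta>"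
  using assms by (simp add: tent_transform_def fejer_kernel_eq E_eq_dirichlet_kernel)

lemma tent_transform_double:
  assumes "X \<ge> 0"
  shows "4 * tent_transform X \<beta> - tent_transform (2 * X) \<beta>
    = of_real (2 * (1 - cos (2 * pi * \<beta> * of_int \<lfloor>X\<rfloor>)))
        * (\<Sum>a\<in>{a. \<bar>of_int a\<bar> \<le> X}. of_int (\<lfloor>X\<rfloor> - \<bar>a\<bar>) * e (of_int a * \<beta>))
      - of_real (2 * frac X - frac (2 * X)) * E (of_int (2 * \<lfloor>X\<rfloor>)) \<beta>
      + (of_real (4 * frac X) * E X \<beta> - of_real (frac (2 * X)) * E (2 * X) \<beta>)"
proof -
  define N where "N = \<lfloor>X\<rfloor>"
  define d :: int where "d = (if frac X < 1/2 then 0 else 1)"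
  have "N \<ge> 0"
    using assms unfolding N_def by simp
  have "\<lfloor>2 * X\<rfloor> = 2 * N + d" "2 * frac X - frac (2 * X) = of_int d"
    unfolding N_def d_def floor_double frac_double by simp_all
  moreover have "fejer_kernel (2 * N + d) \<beta> = fejer_kernel (2 * N) \<beta> + of_int d * dirichlet_kernel (2 * N) \<beta>"
    using fejer_kernel_succ[of "2 * N" \<beta>] \<open>N \<ge> 0\<close> by (simp add: d_def)
  ultimately show ?thesis
    unfolding tent_transform_def E_eq_dirichlet_kernel abs_le_set_eq_interval
      fejer_kernel_def[symmetric] N_def[symmetric] floor_of_int
    using fejer_kernel_double[OF \<open>N \<ge> 0\<close>, of \<beta>] by (simp add: algebra_simps)
qed

lemma W_eq_max: "W h a = 4 * max 0 (real h - of_int \<bar>a\<bar>) - max 0 (2 * real h - of_int \<bar>a\<bar>)"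
  unfolding W_def Let_def by auto

lemma W_eq_0: "2 * int h < \<bar>a\<bar> \<Longrightarrow> W h a = 0"
  by (simp add: W_def)

lemma W_dilated_eq_tents:
  assumes "l > 0"
  shows "W h (a * int l) = real l * (4 * tent (real h / real l) a - tent (2 * real h / real l) a)"
proof -
  have "max 0 (x - of_int \<bar>a * int l\<bar>) = real l * tent (x / real l) a" for x
  proof -
    have "x - of_int \<bar>a * int l\<bar> = real l * (x / real l - of_int \<bar>a\<bar>)"
      using assms by (simp add: abs_mult field_simps)
    then show ?thesis
      unfolding tent_def using assms by (simp add: max_mult_distrib_left)
  qed
  then show ?thesis
    unfolding W_eq_max by (simp add: algebra_simps)
qed

lemma has_sum_W_dilated:
  assumes "l > 0"
  shows "((\<lambda>a. of_real (W h (a * int l)) * e (of_int a * \<beta>)) has_sum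
           of_nat l * (4 * tent_transform (real h / real l) \<beta> - tent_transform (2 * real h / real l) \<beta>)) UNIV"
proof -
  let ?t = "\<lambda>X a. of_real (tent X a) * e (of_int a * \<beta>)"
  have "((\<lambda>a. of_nat l * (4 * ?t (real h / real l) a + - ?t (2 * real h / real l) a)) has_sum
      of_nat l * (4 * tent_transform (real h / real l) \<beta> + - tent_transform (2 * real h / real l) \<beta>)) UNIV"
    by (intro has_sum_cmult_right has_sum_add has_sum_uminusI has_sum_tent)
  then show ?thesis
    using assms by (simp add: W_dilated_eq_tents algebra_simps)
qed

lemma infsum_W_multiples:
  assumes "q > 0"
  shows "(\<Sum>\<^sub>\<infinity>a\<in>{a. int q dvd a}. W h a) = 2 * real q * nint_dist (real h / real q)"
proof -
  define X where "X = real h / real q"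
  have "X \<ge> 0" "2 * real h / real q = 2 * X"
    unfolding X_def by simp_all
  have "((\<lambda>b. of_real (W h (b * int q))) has_sum of_nat q * (4 * tent_transform X 0 - tent_transform (2 * X) 0)) UNIV"
    using has_sum_W_dilated[OF assms, of h 0] unfolding X_def[symmetric] \<open>2 * real h / real q = 2 * X\<close>
    by simp
  also have "of_nat q * (4 * tent_transform X 0 - tent_transform (2 * X) 0)
      = of_real (real q * (4 * frac X * (1 - frac X) - frac (2 * X) * (1 - frac (2 * X))))"
    using \<open>X \<ge> 0\<close> by (simp add: tent_transform_0 power2_eq_square algebra_simps)
  also have "\<dots> = of_real (2 * real q * nint_dist X)"
    unfolding nint_dist_eq_frac_double[symmetric] by simp
  finally have "((\<lambda>b. of_real (W h (b * int q)) :: complex) has_sum of_real (2 * real q * nint_dist X)) UNIV" .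
  then have "((\<lambda>b. W h (b * int q)) has_sum 2 * real q * nint_dist X) UNIV"
    by (simp only: has_sum_of_real_iff)
  then have "(W h has_sum 2 * real q * nint_dist X) ((\<lambda>b. b * int q) ` UNIV)"
    using assms by (subst has_sum_reindex) (auto simp: inj_on_def o_def)
  moreover have "(\<lambda>b. b * int q) ` UNIV = {a. int q dvd a}"
    by (auto elim!: dvdE)
  ultimately show ?thesis
    unfolding X_def by (simp add: infsumI)
qed

lemma has_sum_W:
  "((\<lambda>a. of_real (W h a) * e (of_int a * \<beta>)) has_sum
      of_real (2 * (1 - cos (2 * pi * \<beta> * real h))) * fejer_kernel (int h) \<beta>) UNIV"
proof -
  have double_h: "2 * real h = real (2 * h)"
    by simp
  have "tent_transform (real h) \<beta> = fejer_kernel (int h) \<beta>"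
    "tent_transform (2 * real h) \<beta> = fejer_kernel (2 * int h) \<beta>"
    unfolding tent_transform_def double_h floor_of_nat by (simp_all add: frac_eq_0_iff)
  then show ?thesis
    using has_sum_W_dilated[of 1 h \<beta>] fejer_kernel_double[of "int h" \<beta>] by (simp add: algebra_simps)
qed

lemma sum_W_e_eq:
  assumes "\<beta> \<notin> \<int>"
  shows "(\<Sum>a\<in>{a. \<bar>a\<bar> \<le> 2 * int h}. of_real (W h a) * e (of_int a * \<beta>))
    = of_real (4 * sin (pi * real h * \<beta>) ^ 4 / sin (pi * \<beta>) ^ 2)"
proof -
  have "{a. \<bar>a\<bar> \<le> 2 * int h} = {-2 * int h..2 * int h}"
    by auto
  then have "((\<lambda>a. of_real (W h a) * e (of_int a * \<beta>)) has_sum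
      (\<Sum>a\<in>{a. \<bar>a\<bar> \<le> 2 * int h}. of_real (W h a) * e (of_int a * \<beta>))) UNIV"
    by (intro has_sum_finite_neutralI) (auto simp: W_eq_0)
  then have "(\<Sum>a\<in>{a. \<bar>a\<bar> \<le> 2 * int h}. of_real (W h a) * e (of_int a * \<beta>))
      = of_real (2 * (1 - cos (2 * pi * \<beta> * real h))) * fejer_kernel (int h) \<beta>"
    using has_sum_W has_sum_unique by blast
  also have "\<dots> = of_real (4 * sin (pi * real h * \<beta>) ^ 4 / sin (pi * \<beta>) ^ 2)"
    using cos_double_sin[of "pi * \<beta> * real h"]
    by (simp add: fejer_kernel_eq[OF assms] power4_eq_xxxx power2_eq_square mult_ac)
  finally show ?thesis .
qed

lemma infsum_W_dilated_nonneg: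
  assumes "l > 0"
  shows "(\<Sum>\<^sub>\<infinity>b. of_real (W h (int l * b)) * e (of_int b * \<alpha>)) \<ge> 0"
proof -
  have "0 \<le> (\<Sum>j<l. \<Sum>\<^sub>\<infinity>a. of_real (W h a) * e (of_int a * ((\<alpha> + real j) / real l)))"
    unfolding infsumI[OF has_sum_W]
    by (intro sum_nonneg mult_nonneg_nonneg fejer_kernel_nonneg) (simp_all add: less_eq_complex_def)
  also have "\<dots> = of_nat l * (\<Sum>\<^sub>\<infinity>b. of_real (W h (b * int l)) * e (of_int b * \<alpha>))"
    by (rule sum_translates_infsum_e[OF assms finite_atLeastAtMost_int[of "-2 * int h" "2 * int h"]])
       (auto simp: W_eq_0)
  finally show ?thesis
    using assms unfolding mult.commute[of "int l"] by (auto simp: less_eq_complex_def zero_le_mult_iff)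
qed

theorem lemma4:
  fixes h :: nat
  assumes "h \<ge> 1"
  shows
  "(\<forall>q::nat. q \<ge> 1 \<longrightarrow>
      (\<Sum>\<^sub>\<infinity>a\<in>{a::int. int q dvd a}. W h a) = 2 * real q * nint_dist (real h / real q))
 \<and> (\<forall>\<beta>::real. \<beta> \<notin> \<int> \<longrightarrow>
      (\<Sum>a\<in>{a::int. \<bar>a\<bar> \<le> 2 * int h}. of_real (W h a) * e (of_int a * \<beta>))
        = of_real (4 * sin (pi * real h * \<beta>) ^ 4 / sin (pi * \<beta>) ^ 2))
 \<and> (\<forall>(l::nat) (\<alpha>::real). l \<ge> 1 \<longrightarrow>
      (\<Sum>\<^sub>\<infinity>b::int. of_real (W h (int l * b)) * e (of_int b * \<alpha>)) \<ge> 0)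
 \<and> (\<forall>(l::nat) (\<beta>::real). l \<ge> 1 \<and> \<beta> \<notin> \<int> \<longrightarrow>
      (let N = \<lfloor>real h / real l\<rfloor>;
           M = \<lfloor>2 * real h / real l\<rfloor>;
           tail = of_real (4 * frac (real h / real l)) * E (real h / real l) \<beta>
                  - of_real (frac (2 * real h / real l)) * E (2 * real h / real l) \<beta>;
           lhs = of_real (1 / real l) *
                   (\<Sum>\<^sub>\<infinity>a::int. of_real (W h (a * int l)) * e (of_int a * \<beta>));
           rhs1 = of_real ((4 * sin (pi * \<beta> * of_int N) ^ 2 - sin (pi * \<beta> * of_int M) ^ 2)
                           / sin (pi * \<beta>) ^ 2) + tail;
           rhs2 = of_real (2 * (1 - cos (2 * pi * \<beta> * of_int N))) *
                    (\<Sum>a\<in>{a::int. \<bar>of_int a\<bar> \<le> real h / real l}.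
                        of_int (N - \<bar>a\<bar>) * e (of_int a * \<beta>))
                  - of_real (2 * frac (real h / real l) - frac (2 * real h / real l))
                      * E (of_int (2 * N)) \<beta>
                  + tail
       in lhs = rhs1 \<and> rhs1 = rhs2))"
proof (intro conjI allI impI, goal_cases)
  case (1 q)
  then show ?case
    by (intro infsum_W_multiples) simp
next
  case (2 \<beta>)
  then show ?case
    by (rule sum_W_e_eq)
next
  case (3 l \<alpha>)
  then show ?case
    by (intro infsum_W_dilated_nonneg) simp
next
  case (4 l \<beta>)
  then have "l > 0" "\<beta> \<notin> \<int>"
    by auto
  define X where "X = real h / real l"
  have "X \<ge> 0" and double_X: "2 * real h / real l = 2 * X"
    unfolding X_def by simp_all
  have lhs: "of_real (1 / real l) * (\<Sum>\<^sub>\<infinity>a. of_real (W h (a * int l)) * e (of_int a * \<beta>))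
      = 4 * tent_transform X \<beta> - tent_transform (2 * X) \<beta>"
    using infsumI[OF has_sum_W_dilated[OF \<open>l > 0\<close>, of h \<beta>]] \<open>l > 0\<close>
    unfolding X_def[symmetric] double_X by simp
  have rhs1: "4 * tent_transform X \<beta> - tent_transform (2 * X) \<beta>
      = of_real ((4 * sin (pi * \<beta> * of_int \<lfloor>X\<rfloor>) ^ 2 - sin (pi * \<beta> * of_int \<lfloor>2 * X\<rfloor>) ^ 2)
                 / sin (pi * \<beta>) ^ 2)
        + (of_real (4 * frac X) * E X \<beta> - of_real (frac (2 * X)) * E (2 * X) \<beta>)"
    using \<open>X \<ge> 0\<close> \<open>\<beta> \<notin> \<int>\<close>
    by (simp add: tent_transform_eq_sin diff_divide_distrib algebra_simps)
  show ?case
    unfolding Let_def X_def[symmetric] double_X lhs rhs1[symmetric] tent_transform_double[OF \<open>X \<ge> 0\<close>]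
    by simp
qed

end
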